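(* As $p\to0$, $U(p)=\dfrac{p}{(\log 2)^2}+\Theta(p^2)$, where $U(p):=\min_{r\in[2,\infty)}\dfrac{1}{r\,|\log(1-(1-p)^{r-1})|}$.
   Context: $\log$ is the natural logarithm; $p\in(0,1)$. *)

theory Defs
  imports Complex_Main "HOL-Library.Landau_Symbols"
begin

text \<open>U(p) := min over real r in [2,oo) of 1 / (r * |ln (1 - (1-p)^(r-1))|),
  rendered as the infimum of the attained values (equals the minimum whenever it exists).\<close>
definition U :: "real \<Rightarrow> real" where
  "U p = (INF r\<in>{2..}. 1 / (r * \<bar>ln (1 - (1 - p) powr (r - 1))\<bar>))"

end

theory Submission
  imports Defs "HOL-Real_Asymp.Real_Asymp" "HOL-Analysis.Harmonic_Numbers"
begin

text \<open>Write \<open>L = -ln (1 - p)\<close> and \<open>x = (1 - p) powr (r - 1)\<close>. Then \<open>r L = L - ln x\<close>, so the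
  quantity minimised in \<open>U p\<close> equals \<open>L / ((L - ln x) (-ln (1 - x)))\<close>. The product
  \<open>ln x ln (1 - x)\<close> is at most \<open>(ln 2)\<^sup>2\<close>, with equality at \<open>x = 1/2\<close>. Choosing \<open>r\<close> with \<open>x = 1/2\<close>
  gives \<open>U p \<le> L / ((ln 2)\<^sup>2 + L ln 2)\<close>; bounding \<open>-ln (1 - x)\<close> by \<open>4 ln 2\<close> when \<open>x \<le> 15/16\<close>,
  and otherwise using that \<open>x\<close> is near 1 while \<open>-ln (1 - x) \<le> ln (1/p)\<close>, gives
  \<open>U p \<ge> L / ((ln 2)\<^sup>2 + 4 L ln 2)\<close> for small \<open>p\<close>. Both bounds are
  \<open>p / (ln 2)\<^sup>2 - c p\<^sup>2 + o(p\<^sup>2)\<close> with \<open>c > 0\<close>.\<close>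

lemma one_minus_inverse_le_ln:
  fixes z :: real
  assumes "0 < z"
  shows "1 - 1 / z \<le> ln z"
  using ln_le_minus_one[of "1 / z"] assms by (simp add: ln_div)

lemma mult_ln_le_one_minus_mult_ln:
  fixes x :: real
  assumes "0 < x" "x \<le> 1/2"
  shows "x * ln x \<le> (1 - x) * ln (1 - x)"
proof -
  define y where "y = 1 - x"
  have y: "0 < y" "x \<le> y" using assms by (auto simp: y_def)
  have "1 - x / y \<le> ln y - ln x"
    using one_minus_inverse_le_ln[of "y / x"] y assms by (simp add: ln_div)
  then have "x * (1 - x / y) \<le> x * (ln y - ln x)"
    using assms by (intro mult_left_mono) auto
  then have "y * ln y - x * ln x \<ge> (y - x) * ln y + x * (1 - x / y)"
    by (simp add: algebra_simps)
  also have "(y - x) * ln y + x * (1 - x / y) = (y - x) * (ln y + 1 / y - 1)"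
    using y by (simp add: y_def field_simps)
  also have "\<dots> \<ge> 0"
    using one_minus_inverse_le_ln[of y] y by simp
  finally show ?thesis by (simp add: y_def)
qed

lemma ln_mult_ln_one_minus_mono:
  fixes x y :: real
  assumes "0 < x" "x \<le> y" "y \<le> 1/2"
  shows "ln x * ln (1 - x) \<le> ln y * ln (1 - y)"
proof (rule DERIV_nonneg_imp_increasing_open[OF assms(2)])
  fix t :: real
  assume t: "x < t" "t < y"
  then have t01: "0 < t" "t < 1" using assms by auto
  have "((\<lambda>t. ln t * ln (1 - t)) has_real_derivative
          ((1 - t) * ln (1 - t) - t * ln t) / (t * (1 - t))) (at t)"
    using t01 by (auto intro!: derivative_eq_intros simp: field_simps)
  moreover have "0 \<le> ((1 - t) * ln (1 - t) - t * ln t) / (t * (1 - t))"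
    using mult_ln_le_one_minus_mult_ln[of t] t t01 assms by (intro divide_nonneg_pos) auto
  ultimately show "\<exists>d. ((\<lambda>t. ln t * ln (1 - t)) has_real_derivative d) (at t) \<and> 0 \<le> d"
    by blast
next
  show "continuous_on {x..y} (\<lambda>t. ln t * ln (1 - t))"
    using assms by (auto intro!: continuous_intros)
qed

lemma ln_mult_ln_one_minus_le:
  fixes x :: real
  assumes "0 < x" "x < 1"
  shows "ln x * ln (1 - x) \<le> (ln 2)\<^sup>2"
proof -
  have half: "ln y * ln (1 - y) \<le> (ln 2)\<^sup>2" if "0 < y" "y \<le> 1/2" for y :: real
    using ln_mult_ln_one_minus_mono[OF that order.refl]
    by (simp add: ln_div power2_eq_square)
  show ?thesis
  proof (cases "x \<le> 1/2")
    case True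
    then show ?thesis using half assms by blast
  next
    case False
    then show ?thesis using half[of "1 - x"] assms by (simp add: mult.commute)
  qed
qed

lemma mult_ln_inverse_le:
  fixes y :: real
  assumes "0 < y"
  shows "y * ln (1 / y) \<le> 1 / exp 1"
proof -
  have "ln (1 / y) \<le> 1 / (y * exp 1)"
    using ln_le_minus_one[of "1 / y / exp 1"] assms by (simp add: ln_div ln_mult)
  then have "y * ln (1 / y) \<le> y * (1 / (y * exp 1))"
    using assms by (intro mult_left_mono) auto
  then show ?thesis using assms by simp
qed

text \<open>For \<open>x\<close> near 1 the factor \<open>-ln (1 - x)\<close> is only controlled through \<open>x \<le> 1 - p\<close>,
  i.e. by \<open>ln (1/p)\<close>; hence the smallness hypothesis.\<close>

lemma shifted_ln_product_le:
  fixes p x L :: real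
  assumes p: "0 < p" and L: "0 < L" and x: "0 < x" "x \<le> 1 - p"
    and small: "L * ln (1 / p) \<le> 1/100"
  shows "(L - ln x) * (- ln (1 - x)) \<le> (ln 2)\<^sup>2 + 4 * ln 2 * L"
proof -
  have ln2: "2/3 \<le> ln (2::real)" by (rule ln2_ge_two_thirds)
  have x1: "x < 1" using x p by simp
  have expand: "(L - ln x) * (- ln (1 - x)) = (- ln x) * (- ln (1 - x)) + L * (- ln (1 - x))"
    by (simp add: algebra_simps)
  have "0 \<le> 4 * ln 2 * L" using L by simp
  show ?thesis
  proof (cases "x \<le> 15/16")
    case True
    have "ln (1/16) \<le> ln (1 - x)" using True x by (subst ln_le_cancel_iff) auto
    moreover have "ln (1/16::real) = - (4 * ln 2)"
      using ln_realpow[of 2 4] by (simp add: ln_div)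
    ultimately have "L * (- ln (1 - x)) \<le> L * (4 * ln 2)"
      using L by (intro mult_left_mono) auto
    moreover have "(- ln x) * (- ln (1 - x)) \<le> (ln 2)\<^sup>2"
      using ln_mult_ln_one_minus_le[OF x(1) x1] by simp
    ultimately show ?thesis unfolding expand by (simp add: mult_ac)
  next
    case False
    have "- ln x \<le> (1 - x) * (1 / x)"
      using one_minus_inverse_le_ln[OF x(1)] x by (simp add: field_simps)
    also have "\<dots> \<le> (1 - x) * (16/15)"
      using False x1 by (intro mult_left_mono) (auto simp: field_simps)
    finally have "- ln x \<le> (16/15) * (1 - x)" by simp
    moreover have "0 \<le> - ln (1 - x)" using x p by simp
    ultimately have "(- ln x) * (- ln (1 - x)) \<le> (16/15) * (1 - x) * (- ln (1 - x))"
      by (rule mult_right_mono)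
    also have "\<dots> = (16/15) * ((1 - x) * ln (1 / (1 - x)))"
      using x1 by (simp add: ln_div)
    finally have "(- ln x) * (- ln (1 - x)) \<le> (16/15) * ((1 - x) * ln (1 / (1 - x)))" .
    moreover have "(1 - x) * ln (1 / (1 - x)) \<le> 2/5"
    proof -
      have "1 / exp 1 \<le> (2/5::real)"
        using exp_lower_Taylor_quadratic[of 1] by (simp add: divide_simps)
      then show ?thesis using mult_ln_inverse_le[of "1 - x"] x1 by simp
    qed
    moreover have "L * (- ln (1 - x)) \<le> L * ln (1 / p)"
      using x p L by (intro mult_left_mono) (simp_all add: ln_div)
    moreover have "(4/9::real) \<le> (ln 2)\<^sup>2"
      using power_mono[OF ln2, of 2] by (simp add: power2_eq_square)
    ultimately show ?thesis unfolding expand using small \<open>0 \<le> 4 * ln 2 * L\<close> by linarith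
  qed
qed

definition U_approx :: "real \<Rightarrow> real \<Rightarrow> real" where
  "U_approx c p = - ln (1 - p) / ((ln 2)\<^sup>2 + c * ln 2 * - ln (1 - p))"

lemma U_le_U_approx_1:
  fixes p :: real
  assumes p: "0 < p" "p \<le> 1/2"
  shows "U p \<le> U_approx 1 p"
proof -
  define L where "L = - ln (1 - p)"
  have L: "0 < L" using p by (simp add: L_def)
  have "ln (1/2) \<le> ln (1 - p)" using p by (subst ln_le_cancel_iff) auto
  then have "L \<le> ln 2" by (simp add: L_def ln_div)
  define r where "r = 1 + ln 2 / L"
  have r: "r \<in> {2..}" using \<open>L \<le> ln 2\<close> L by (simp add: r_def field_simps)
  have "(1 - p) powr (r - 1) = exp (- ln 2)"
    using p L by (simp add: r_def powr_def L_def)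
  then have half: "(1 - p) powr (r - 1) = 1/2" by (simp add: exp_minus)
  have "bdd_below ((\<lambda>r. 1 / (r * \<bar>ln (1 - (1 - p) powr (r - 1))\<bar>)) ` {2..})"
    by (rule bdd_belowI[of _ 0]) auto
  then have "U p \<le> 1 / (r * \<bar>ln (1 - (1 - p) powr (r - 1))\<bar>)"
    unfolding U_def using r by (rule cINF_lower)
  also have "\<dots> = 1 / (r * ln 2)" by (simp add: half ln_div)
  also have "\<dots> = L / ((ln 2)\<^sup>2 + 1 * ln 2 * L)"
    using L by (simp add: r_def field_simps power2_eq_square)
  also have "\<dots> = U_approx 1 p"
    by (simp add: U_approx_def flip: L_def)
  finally show ?thesis .
qed

lemma U_approx_4_le_U:
  fixes p :: real
  assumes p: "0 < p" "p < 1" and small: "- ln (1 - p) * ln (1 / p) \<le> 1/100"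
  shows "U_approx 4 p \<le> U p"
  unfolding U_def
proof (rule cINF_greatest)
  fix r :: real
  assume "r \<in> {2..}"
  then have r: "2 \<le> r" by simp
  define L where "L = - ln (1 - p)"
  define x where "x = (1 - p) powr (r - 1)"
  have L: "0 < L" using p by (simp add: L_def)
  have x: "0 < x" using p by (simp add: x_def)
  have "x \<le> (1 - p) powr 1"
    unfolding x_def using p r by (intro powr_mono') auto
  then have "x \<le> 1 - p" using p by simp
  define k where "k = - ln (1 - x)"
  have k: "0 < k" using \<open>x \<le> 1 - p\<close> p x by (simp add: k_def)
  have "r * L = L - ln x" using p by (simp add: x_def ln_powr L_def algebra_simps)
  then have "r * k * L = (L - ln x) * k" by (simp add: algebra_simps flip: \<open>r * L = L - ln x\<close>)
  also have "\<dots> \<le> (ln 2)\<^sup>2 + 4 * ln 2 * L"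
    unfolding k_def using small by (intro shifted_ln_product_le[OF p(1) L x \<open>x \<le> 1 - p\<close>]) (simp add: L_def)
  finally have "r * k * L \<le> (ln 2)\<^sup>2 + 4 * ln 2 * L" .
  moreover have "0 < (ln 2)\<^sup>2 + 4 * ln 2 * L" using L by (intro add_pos_nonneg) auto
  ultimately have "L / ((ln 2)\<^sup>2 + 4 * ln 2 * L) \<le> 1 / (r * k)"
    using L k r by (simp add: divide_simps mult.commute mult.left_commute)
  then show "U_approx 4 p \<le> 1 / (r * \<bar>ln (1 - (1 - p) powr (r - 1))\<bar>)"
    using k by (simp add: U_approx_def k_def x_def flip: L_def)
qed simp

lemma U_approx_expansion:
  "((\<lambda>p. (U_approx c p - p / (ln 2)\<^sup>2) / p\<^sup>2) \<longlongrightarrow> (1/2 - c / ln 2) / (ln 2)\<^sup>2) (at_right 0)"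
  unfolding U_approx_def by (real_asymp simp: field_simps power2_eq_square)

lemma eventually_U_approx_bounds:
  "\<forall>\<^sub>F p in at_right 0. U_approx 4 p \<le> U p \<and> U p \<le> U_approx 1 p"
proof -
  have "((\<lambda>p::real. - ln (1 - p) * ln (1 / p)) \<longlongrightarrow> 0) (at_right 0)" by real_asymp
  then have "\<forall>\<^sub>F p in at_right 0. - ln (1 - p) * ln (1 / p) < (1/100::real)"
    by (rule order_tendstoD(2)) simp
  moreover have "\<forall>\<^sub>F p in at_right 0. 0 < p \<and> p \<le> (1/2::real)"
    unfolding eventually_at_right_field by (rule exI[of _ "1/2"]) auto
  ultimately show ?thesis
  proof eventually_elim
    case (elim p)
    then have "0 < p" "p \<le> 1/2" by simp_all
    then show ?case
      using U_approx_4_le_U[OF \<open>0 < p\<close> _ less_imp_le[OF elim(1)]] U_le_U_approx_1 by simp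
  qed
qed

lemma bigtheta_if_between:
  fixes f g h w :: "'a \<Rightarrow> real"
  assumes between: "\<forall>\<^sub>F x in F. g x \<le> f x \<and> f x \<le> h x"
    and w: "\<forall>\<^sub>F x in F. 0 < w x"
    and g: "((\<lambda>x. g x / w x) \<longlongrightarrow> a) F"
    and h: "((\<lambda>x. h x / w x) \<longlongrightarrow> b) F" and "b < 0"
  shows "f \<in> \<Theta>[F](w)"
proof (rule bigthetaI'[of "- b / 2" "1 + \<bar>a\<bar>"])
  have "\<forall>\<^sub>F x in F. a - 1 < g x / w x" by (rule order_tendstoD(1)[OF g]) simp
  moreover have "\<forall>\<^sub>F x in F. h x / w x < b / 2" by (rule order_tendstoD(2)[OF h]) (use \<open>b < 0\<close> in simp)
  ultimately show "\<forall>\<^sub>F x in F. - b / 2 * norm (w x) \<le> norm (f x) \<and> norm (f x) \<le> (1 + \<bar>a\<bar>) * norm (w x)"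
    using between w
  proof eventually_elim
    case (elim x)
    then have w: "0 < w x" and lower: "(1 - a) * w x > - f x" and upper: "f x < b / 2 * w x"
      by (auto simp: field_simps)
    have "(1 - a) * w x \<le> (1 + \<bar>a\<bar>) * w x" using w by (intro mult_right_mono) auto
    then have "- f x \<le> (1 + \<bar>a\<bar>) * w x" using lower by linarith
    moreover have "b / 2 * w x < 0" using \<open>b < 0\<close> w by (simp add: mult_neg_pos)
    then have "\<bar>f x\<bar> = - f x" using upper by simp
    moreover have "- b / 2 * w x \<le> - f x" using upper by (simp add: algebra_simps)
    ultimately show ?case using w by simp
  qed
qed (use \<open>b < 0\<close> in simp_all)

theorem claim1:
  shows "(\<lambda>p. U p - p / (ln 2)^2) \<in> \<Theta>[at_right 0](\<lambda>p. p^2)"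
proof (rule bigtheta_if_between)
  show "\<forall>\<^sub>F p in at_right 0. U_approx 4 p - p / (ln 2)^2 \<le> U p - p / (ln 2)^2
      \<and> U p - p / (ln 2)^2 \<le> U_approx 1 p - p / (ln 2)^2"
    by (rule eventually_mono[OF eventually_U_approx_bounds]) (blast intro: diff_right_mono)
  show "\<forall>\<^sub>F p in at_right 0. 0 < (p::real)^2"
    using eventually_at_right_less[of 0] by eventually_elim simp
  have "1/2 < 1 / ln (2::real)" using ln_2_less_1 by (simp add: field_simps)
  then show "(1/2 - 1 / ln 2) / (ln 2)\<^sup>2 < (0::real)" by (intro divide_neg_pos) auto
qed (rule U_approx_expansion)+

end
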